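(* Let $S=(n,\phi,F)$ be a semicoherent system whose joint lifetime distribution $F$ has no ties, and let $T$ be the system lifetime. Then for every $j\in[n]$, $$I_{\mathrm{BP}}^{(j)}:=\Pr(T=X_j)=\sum_{A\subseteq[n]\setminus\{j\}}q_j(A)\,\big(\phi(A\cup\{j\})-\phi(A)\big)=\sum_{A\subseteq[n]}(-1)^{|\{j\}\setminus A|}\,q_j(A\setminus\{j\})\,\phi(A).$$
   Context: $[n]=\{1,\ldots,n\}$. Boolean vectors $\mathbf{x}\in\{0,1\}^n$ are identified with subsets $A\subseteq[n]$ via $x_i=1\iff i\in A$, so $\phi$ is viewed both as a function on $\{0,1\}^n$ and on $2^{[n]}$. A semicoherent system $S=(n,\phi,F)$ consists of a structure function $\phi:\{0,1\}^n\to\{0,1\}$ that is nondecreasing in each variable with $\phi(\varnothing)=0$, $\phi([n])=1$, and the joint c.d.f. $F$ of nonnegative component lifetimes $X_1,\ldots,X_n$. $F$ has no ties if $\Pr(X_i=X_k)=0$ for all $i\neq k$. At time $t$ component $i$ is working iff $X_i>t$; the system lifetime is $T=\inf\{t\geq0:\phi(\{i: X_i>t\})=0\}$. For $j\in[n]$, $A\subseteq[n]\setminus\{j\}$: $q_j(A)=\Pr\big(\max_{i\notin A\cup\{j\}}X_i<X_j<\min_{i\in A}X_i\big)$ (max over empty set $=-\infty$, min over empty set $=+\infty$). *)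

theory Defs
  imports "HOL-Probability.Probability"
begin

text \<open>A structure function on subsets of [n] = {1..n} (identified with Boolean vectors).
  Semicoherence: nondecreasing, phi of the empty set is 0, phi of [n] is 1.\<close>
definition semicoherent :: "nat \<Rightarrow> (nat set \<Rightarrow> bool) \<Rightarrow> bool" where
  "semicoherent n phi \<longleftrightarrow>
     (\<forall>A B. A \<subseteq> B \<and> B \<subseteq> {1..n} \<longrightarrow> phi A \<longrightarrow> phi B) \<and>
     \<not> phi {} \<and> phi {1..n}"

definition system_lifetime ::
    "nat \<Rightarrow> (nat set \<Rightarrow> bool) \<Rightarrow> (nat \<Rightarrow> 'a \<Rightarrow> real) \<Rightarrow> 'a \<Rightarrow> real" where
  "system_lifetime n phi X \<omega> =
     Inf {t. 0 \<le> t \<and> \<not> phi {i \<in> {1..n}. X i \<omega> > t}}"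

definition qj ::
    "'a measure \<Rightarrow> nat \<Rightarrow> (nat \<Rightarrow> 'a \<Rightarrow> real) \<Rightarrow> nat \<Rightarrow> nat set \<Rightarrow> real" where
  "qj M n X j A = measure M {\<omega> \<in> space M.
      (\<forall>i \<in> {1..n} - (A \<union> {j}). X i \<omega> < X j \<omega>) \<and> (\<forall>i \<in> A. X j \<omega> < X i \<omega>)}"

end

theory Submission
  imports Defs
begin

(* Fix a realisation x of the lifetimes.  The system works at time t iff
   phi holds on the working set W t = {i. x i > t}, which only changes at the values x i.
   Hence the set of failure times {t >= 0. \<not> phi (W t)} has a least element, and the
   lifetime T equals x j iff \<not> phi (W (x j)) while phi (W t) holds for all t < x j.
   For nonnegative, pairwise distinct x i this says exactly that the set U of components
   outliving j is critical for j: phi (U \<union> {j}) and \<not> phi U.  The events defining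
   q_j(A) ("ordering events") say that U = A; they are pairwise disjoint and, almost
   surely, one of them occurs.  So {T = X j} is, up to a null set, the disjoint union of
   the ordering events of the critical sets, and Pr(T = X j) is the sum of q_j(A) over
   critical A.  Monotonicity of phi turns this into the first sum, and splitting the
   subsets of [n] according to whether they contain j gives the alternating second sum. *)

definition failure_times :: "(nat set \<Rightarrow> bool) \<Rightarrow> nat set \<Rightarrow> (nat \<Rightarrow> real) \<Rightarrow> real set" where
  "failure_times phi I x = {t. 0 \<le> t \<and> \<not> phi {i \<in> I. x i > t}}"

lemma system_lifetime_failure_times:
  "system_lifetime n phi X \<omega> = Inf (failure_times phi {1..n} (\<lambda>i. X i \<omega>))"
  by (simp add: system_lifetime_def failure_times_def)

(* The working set is constant between consecutive candidate times 0 and x i, so every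
   failure time can be lowered to a candidate failure time. *)
lemma failure_time_candidate:
  assumes "finite I" and "t \<in> failure_times phi I x"
  obtains c where "c \<in> insert 0 (x ` I)" and "c \<le> t" and "c \<in> failure_times phi I x"
proof -
  define C where "C = {c \<in> insert 0 (x ` I). c \<le> t}"
  have "0 \<in> C" and "finite C"
    using assms by (auto simp: C_def failure_times_def)
  then have c: "Max C \<in> C" and c_max: "\<And>d. d \<in> C \<Longrightarrow> d \<le> Max C"
    by (auto intro: Max_in)
  have "x i > Max C \<longleftrightarrow> x i > t" if "i \<in> I" for i
  proof
    assume "x i > Max C"
    then have "x i \<notin> C"
      using c_max by force
    then show "x i > t"
      using \<open>i \<in> I\<close> by (simp add: C_def)
  next
    assume "x i > t"
    then show "x i > Max C"
      using c by (simp add: C_def)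
  qed
  then have "{i \<in> I. x i > Max C} = {i \<in> I. x i > t}"
    by blast
  moreover have "0 \<le> Max C"
    using c_max \<open>0 \<in> C\<close> by blast
  ultimately show ?thesis
    using that[of "Max C"] c assms(2) by (auto simp: C_def failure_times_def)
qed

(* Consequently a lower bound for all failure times need only be checked at candidates;
   this reduces the event {T = Y} to finitely many conditions (used for measurability). *)
lemma failure_times_lower_bound_iff:
  assumes "finite I"
  shows "(\<forall>t \<in> failure_times phi I x. y \<le> t) \<longleftrightarrow>
           (0 \<in> failure_times phi I x \<longrightarrow> y \<le> 0) \<and>
           (\<forall>i \<in> I. x i \<in> failure_times phi I x \<longrightarrow> y \<le> x i)"
proof
  assume "(0 \<in> failure_times phi I x \<longrightarrow> y \<le> 0) \<and>
           (\<forall>i \<in> I. x i \<in> failure_times phi I x \<longrightarrow> y \<le> x i)"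
  then have candidates: "y \<le> c" if "c \<in> insert 0 (x ` I)" "c \<in> failure_times phi I x" for c
    using that by blast
  show "\<forall>t \<in> failure_times phi I x. y \<le> t"
  proof
    fix t assume "t \<in> failure_times phi I x"
    then obtain c where "c \<in> insert 0 (x ` I)" "c \<le> t" "c \<in> failure_times phi I x"
      using failure_time_candidate[OF assms] by blast
    then show "y \<le> t"
      using candidates[of c] by linarith
  qed
qed auto

(* If phi fails on the empty set, the failure times are nonempty and have a least element,
   so the lifetime is a minimum, not merely an infimum. *)
lemma Inf_failure_times_iff:
  assumes "finite I" and "\<not> phi {}"
  shows "Inf (failure_times phi I x) = y \<longleftrightarrow>
           y \<in> failure_times phi I x \<and> (\<forall>t \<in> failure_times phi I x. y \<le> t)"
proof -
  define S where "S = failure_times phi I x"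
  define C where "C = insert 0 (x ` I) \<inter> S"
  define m where "m = Max (insert 0 (x ` I))"
  have "0 \<le> m" and none_working: "{i \<in> I. x i > m} = {}"
    using assms(1) by (auto simp: m_def not_less)
  then have "m \<in> S"
    using assms(2) unfolding S_def failure_times_def mem_Collect_eq none_working by simp
  then obtain c0 where "c0 \<in> C"
    using failure_time_candidate[OF assms(1)] unfolding C_def S_def by blast
  moreover have "finite C"
    using assms(1) by (simp add: C_def)
  ultimately have min_in: "Min C \<in> S" by (auto dest: Min_in simp: C_def)
  have min_le: "Min C \<le> t" if "t \<in> S" for t
  proof -
    obtain c where "c \<in> insert 0 (x ` I)" "c \<le> t" "c \<in> S"
      using failure_time_candidate[OF assms(1)] \<open>t \<in> S\<close> unfolding S_def by blast
    then have "Min C \<le> c"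
      using \<open>finite C\<close> by (simp add: C_def)
    with \<open>c \<le> t\<close> show ?thesis by linarith
  qed
  have "Inf S = Min C"
    using min_in min_le by (rule cInf_eq_minimum)
  then show ?thesis
    using min_in min_le by (auto simp: S_def[symmetric] intro: order.antisym)
qed

lemma ordering_pattern_iff:
  fixes x :: "nat \<Rightarrow> real"
  assumes "A \<subseteq> {1..n} - {j}"
  shows "(\<forall>i \<in> {1..n} - (A \<union> {j}). x i < x j) \<and> (\<forall>i \<in> A. x j < x i) \<longleftrightarrow>
           A = {i \<in> {1..n}. x i > x j} \<and> (\<forall>i \<in> {1..n} - {j}. x i \<noteq> x j)"
proof
  assume pattern: "(\<forall>i \<in> {1..n} - (A \<union> {j}). x i < x j) \<and> (\<forall>i \<in> A. x j < x i)"
  have "A \<subseteq> {i \<in> {1..n}. x i > x j}"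
    using assms pattern by blast
  moreover have "{i \<in> {1..n}. x i > x j} \<subseteq> A"
  proof
    fix i assume i: "i \<in> {i \<in> {1..n}. x i > x j}"
    show "i \<in> A"
    proof (rule ccontr)
      assume "i \<notin> A"
      with i have "i \<in> {1..n} - (A \<union> {j})" by auto
      with pattern have "x i < x j" by blast
      with i show False by simp
    qed
  qed
  moreover have "\<forall>i \<in> {1..n} - {j}. x i \<noteq> x j"
  proof
    fix i assume "i \<in> {1..n} - {j}"
    then have "x j < x i \<or> x i < x j"
      using pattern by blast
    then show "x i \<noteq> x j" by auto
  qed
  ultimately show "A = {i \<in> {1..n}. x i > x j} \<and> (\<forall>i \<in> {1..n} - {j}. x i \<noteq> x j)"
    by blast
next
  assume "A = {i \<in> {1..n}. x i > x j} \<and> (\<forall>i \<in> {1..n} - {j}. x i \<noteq> x j)"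
  then have A: "A = {i \<in> {1..n}. x i > x j}" and no_ties: "\<forall>i \<in> {1..n} - {j}. x i \<noteq> x j"
    by blast+
  show "(\<forall>i \<in> {1..n} - (A \<union> {j}). x i < x j) \<and> (\<forall>i \<in> A. x j < x i)"
  proof (intro conjI ballI)
    fix i assume "i \<in> {1..n} - (A \<union> {j})"
    then have "x i \<noteq> x j" and "\<not> x j < x i"
      using A no_ties by auto
    then show "x i < x j" by simp
  next
    fix i assume "i \<in> A"
    then show "x j < x i" using A by simp
  qed
qed

lemma lifetime_eq_component_iff:
  fixes x :: "nat \<Rightarrow> real"
  assumes phi: "semicoherent n phi" and j: "j \<in> {1..n}"
    and nonneg: "\<And>i. i \<in> {1..n} \<Longrightarrow> 0 \<le> x i"
    and no_ties: "\<And>i k. i \<in> {1..n} \<Longrightarrow> k \<in> {1..n} \<Longrightarrow> i \<noteq> k \<Longrightarrow> x i \<noteq> x k"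
  defines "U \<equiv> {i \<in> {1..n}. x i > x j}"
  shows "Inf (failure_times phi {1..n} x) = x j \<longleftrightarrow> phi (U \<union> {j}) \<and> \<not> phi U"
proof -
  have mono: "\<And>A B. A \<subseteq> B \<Longrightarrow> B \<subseteq> {1..n} \<Longrightarrow> phi A \<Longrightarrow> phi B"
    and "\<not> phi {}" and "phi {1..n}"
    using phi unfolding semicoherent_def by blast+
  define S where "S = failure_times phi {1..n} x"
  have "x j \<in> S \<longleftrightarrow> \<not> phi U"
    using nonneg j by (simp add: S_def failure_times_def U_def)
  moreover have "(\<forall>t \<in> S. x j \<le> t) \<longleftrightarrow> phi (U \<union> {j})"
  proof
    assume critical: "phi (U \<union> {j})"
    show "\<forall>t \<in> S. x j \<le> t"
    proof (intro ballI leI notI)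
      fix t assume "t \<in> S" and "t < x j"
      then have "U \<union> {j} \<subseteq> {i \<in> {1..n}. x i > t}"
        using j by (auto simp: U_def)
      then have "phi {i \<in> {1..n}. x i > t}"
        using mono critical by blast
      with \<open>t \<in> S\<close> show False
        by (simp add: S_def failure_times_def)
    qed
  next
    assume first: "\<forall>t \<in> S. x j \<le> t"
    define L where "L = {i \<in> {1..n}. x i < x j}"
    have above_or_below: "x j < x i \<or> i \<in> L" if "i \<in> {1..n}" and "i \<noteq> j" for i
      using no_ties[OF that(1) j that(2)] that(1) by (auto simp: L_def)
    show "phi (U \<union> {j})"
    proof (cases "L = {}")
      case True
      then have "U \<union> {j} = {1..n}"
        using above_or_below j by (auto simp: U_def)
      then show ?thesis
        using \<open>phi {1..n}\<close> by simp
    next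
      case False
      have "finite (x ` L)" and "x ` L \<noteq> {}"
        using False by (auto simp: L_def)
      then have "Max (x ` L) \<in> x ` L"
        by (rule Max_in)
      then obtain i0 where i0: "i0 \<in> L" "x i0 = Max (x ` L)"
        by (metis imageE)
      have i0_max: "x i \<le> x i0" if "i \<in> L" for i
        using i0(2) \<open>finite (x ` L)\<close> that by simp
      have "{i \<in> {1..n}. x i > x i0} = U \<union> {j}"
      proof
        show "U \<union> {j} \<subseteq> {i \<in> {1..n}. x i > x i0}"
          using i0(1) j by (auto simp: U_def L_def)
        show "{i \<in> {1..n}. x i > x i0} \<subseteq> U \<union> {j}"
        proof
          fix i assume i: "i \<in> {i \<in> {1..n}. x i > x i0}"
          show "i \<in> U \<union> {j}"
          proof (cases "i = j")
            case False
            with i i0_max above_or_below show ?thesis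
              unfolding U_def by fastforce
          qed simp
        qed
      qed
      moreover have "x i0 \<notin> S"
        using first i0(1) by (auto simp: L_def)
      ultimately show ?thesis
        using nonneg i0(1) by (simp add: S_def failure_times_def L_def)
    qed
  qed
  ultimately show ?thesis
    using Inf_failure_times_iff[of "{1..n}" phi x "x j"] \<open>\<not> phi {}\<close> by (auto simp: S_def)
qed

lemma sum_Pow_insert:
  fixes f :: "'a set \<Rightarrow> 'b::comm_monoid_add"
  assumes "finite R" and "a \<notin> R"
  shows "(\<Sum>A \<in> Pow (insert a R). f A) = (\<Sum>A \<in> Pow R. f A) + (\<Sum>A \<in> Pow R. f (insert a A))"
proof -
  have "inj_on (insert a) (Pow R)"
    using assms(2) unfolding inj_on_def by (metis Pow_iff insert_ident subset_iff)
  then have "(\<Sum>A \<in> insert a ` Pow R. f A) = (\<Sum>A \<in> Pow R. f (insert a A))"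
    by (simp add: sum.reindex)
  moreover have "(\<Sum>A \<in> Pow (insert a R). f A) = (\<Sum>A \<in> Pow R. f A) + (\<Sum>A \<in> insert a ` Pow R. f A)"
    unfolding Pow_insert by (rule sum.union_disjoint) (use assms in auto)
  ultimately show ?thesis by simp
qed

lemma sum_increments_alternating:
  fixes q g :: "'a set \<Rightarrow> 'b::comm_ring_1"
  assumes "finite R" and "j \<notin> R"
  shows "(\<Sum>A \<in> Pow R. q A * (g (A \<union> {j}) - g A))
           = (\<Sum>A \<in> Pow (insert j R). (-1) ^ card ({j} - A) * q (A - {j}) * g A)"
proof -
  have "(\<Sum>A \<in> Pow (insert j R). (-1) ^ card ({j} - A) * q (A - {j}) * g A)
      = (\<Sum>A \<in> Pow R. (-1) ^ card ({j} - A) * q (A - {j}) * g A)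
        + (\<Sum>A \<in> Pow R. (-1) ^ card ({j} - insert j A) * q (insert j A - {j}) * g (insert j A))"
    using assms by (rule sum_Pow_insert)
  also have "\<dots> = (\<Sum>A \<in> Pow R. - (q A * g A)) + (\<Sum>A \<in> Pow R. q A * g (A \<union> {j}))"
  proof (intro arg_cong2[where f = "(+)"] sum.cong refl)
    fix A assume "A \<in> Pow R"
    then have "j \<notin> A" using assms(2) by blast
    then show "(-1) ^ card ({j} - A) * q (A - {j}) * g A = - (q A * g A)"
      and "(-1) ^ card ({j} - insert j A) * q (insert j A - {j}) * g (insert j A) = q A * g (A \<union> {j})"
      by (simp_all add: insert_Diff_if)
  qed
  finally show ?thesis
    by (simp add: right_diff_distrib sum_subtractf sum_negf)
qed

(* phi evaluated at a random set determined by finitely many events is measurable,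
   being a finite disjunction over the possible values of that set. *)
lemma pred_structure_of_events:
  assumes "finite I" and "\<And>k. k \<in> I \<Longrightarrow> Measurable.pred M (P k)"
  shows "Measurable.pred M (\<lambda>\<omega>. phi {k \<in> I. P k \<omega>})"
proof -
  have "phi {k \<in> I. P k \<omega>} \<longleftrightarrow> (\<exists>B \<in> Pow I. phi B \<and> (\<forall>k \<in> I. k \<in> B \<longleftrightarrow> P k \<omega>))" for \<omega>
  proof
    assume "phi {k \<in> I. P k \<omega>}"
    then show "\<exists>B \<in> Pow I. phi B \<and> (\<forall>k \<in> I. k \<in> B \<longleftrightarrow> P k \<omega>)"
      by (intro bexI[of _ "{k \<in> I. P k \<omega>}"]) auto
  next
    assume "\<exists>B \<in> Pow I. phi B \<and> (\<forall>k \<in> I. k \<in> B \<longleftrightarrow> P k \<omega>)"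
    then obtain B where "B \<subseteq> I" "phi B" "\<forall>k \<in> I. k \<in> B \<longleftrightarrow> P k \<omega>" by auto
    moreover from this have "B = {k \<in> I. P k \<omega>}" by auto
    ultimately show "phi {k \<in> I. P k \<omega>}" by simp
  qed
  then show ?thesis
    using assms by (simp only:) (intro pred_intros_finite pred_intros_logic; simp)
qed

lemma measurable_lifetime_event:
  assumes "\<not> phi {}" and X: "\<And>i. i \<in> {1..n} \<Longrightarrow> X i \<in> borel_measurable M"
    and Y: "Y \<in> borel_measurable M"
  shows "Measurable.pred M (\<lambda>\<omega>. system_lifetime n phi X \<omega> = Y \<omega>)"
proof -
  have lifetime_event: "(\<lambda>\<omega>. system_lifetime n phi X \<omega> = Y \<omega>) =
      (\<lambda>\<omega>. (0 \<le> Y \<omega> \<and> \<not> phi {i \<in> {1..n}. X i \<omega> > Y \<omega>})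
          \<and> (\<not> phi {i \<in> {1..n}. X i \<omega> > 0} \<longrightarrow> Y \<omega> \<le> 0)
          \<and> (\<forall>i \<in> {1..n}. 0 \<le> X i \<omega> \<and> \<not> phi {k \<in> {1..n}. X k \<omega> > X i \<omega>}
                 \<longrightarrow> Y \<omega> \<le> X i \<omega>))"
    unfolding system_lifetime_failure_times
      Inf_failure_times_iff[of "{1..n}" phi, OF finite_atLeastAtMost assms(1)]
      failure_times_lower_bound_iff[OF finite_atLeastAtMost]
    by (simp add: failure_times_def)
  have working: "Measurable.pred M (\<lambda>\<omega>. phi {k \<in> {1..n}. X k \<omega> > c \<omega>})"
    if "c \<in> borel_measurable M" for c
    using that X by (intro pred_structure_of_events) measurable
  show ?thesis
    unfolding lifetime_event using X Y
    by (intro pred_intros_logic pred_intros_finite working finite_atLeastAtMost borel_measurable_const)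
      (auto simp: Measurable.pred_def intro!: borel_measurable_le)
qed

definition ordering_event ::
    "'a measure \<Rightarrow> nat \<Rightarrow> (nat \<Rightarrow> 'a \<Rightarrow> real) \<Rightarrow> nat \<Rightarrow> nat set \<Rightarrow> 'a set" where
  "ordering_event M n X j A = {\<omega> \<in> space M.
      (\<forall>i \<in> {1..n} - (A \<union> {j}). X i \<omega> < X j \<omega>) \<and> (\<forall>i \<in> A. X j \<omega> < X i \<omega>)}"

lemma qj_ordering_event: "qj M n X j A = measure M (ordering_event M n X j A)"
  by (simp add: qj_def ordering_event_def)

lemma ordering_event_sets:
  assumes "A \<subseteq> {1..n}" and "j \<in> {1..n}" and X: "\<And>i. i \<in> {1..n} \<Longrightarrow> X i \<in> borel_measurable M"
  shows "ordering_event M n X j A \<in> sets M"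
proof -
  have "finite A"
    using assms(1) finite_subset by blast
  then have "Measurable.pred M (\<lambda>\<omega>. (\<forall>i \<in> {1..n} - (A \<union> {j}). X i \<omega> < X j \<omega>) \<and> (\<forall>i \<in> A. X j \<omega> < X i \<omega>))"
    using assms by (intro pred_intros_logic pred_intros_finite)
      (auto simp: Measurable.pred_def intro!: borel_measurable_less)
  then show ?thesis
    unfolding ordering_event_def by (rule predE)
qed

(* Distinct sets A, B have disjoint ordering events, since the event determines A. *)
lemma ordering_events_disjoint:
  assumes "A \<subseteq> {1..n} - {j}" and "B \<subseteq> {1..n} - {j}" and "A \<noteq> B"
  shows "ordering_event M n X j A \<inter> ordering_event M n X j B = {}"
proof (rule ccontr)
  assume "ordering_event M n X j A \<inter> ordering_event M n X j B \<noteq> {}"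
  then obtain \<omega> where "\<omega> \<in> ordering_event M n X j A" and "\<omega> \<in> ordering_event M n X j B"
    by blast
  then have "A = {i \<in> {1..n}. X i \<omega> > X j \<omega>}" and "B = {i \<in> {1..n}. X i \<omega> > X j \<omega>}"
    unfolding ordering_event_def
    using ordering_pattern_iff[OF assms(1), of "\<lambda>i. X i \<omega>"]
      ordering_pattern_iff[OF assms(2), of "\<lambda>i. X i \<omega>"]
    by blast+
  with assms(3) show False by simp
qed

lemma (in finite_measure) measure_Union_ordering_events:
  assumes "\<A> \<subseteq> Pow ({1..n} - {j})" and "j \<in> {1..n}"
    and "\<And>i. i \<in> {1..n} \<Longrightarrow> X i \<in> borel_measurable M"
  shows "measure M (\<Union>A \<in> \<A>. ordering_event M n X j A) = (\<Sum>A \<in> \<A>. qj M n X j A)"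
  unfolding qj_ordering_event
proof (rule finite_measure_finite_Union)
  show "finite \<A>"
    using assms(1) by (rule finite_subset) simp
  have subsets: "A \<subseteq> {1..n} - {j}" if "A \<in> \<A>" for A
    using assms(1) that by blast
  show "ordering_event M n X j ` \<A> \<subseteq> sets M"
  proof (rule image_subsetI)
    fix A assume "A \<in> \<A>"
    then have "A \<subseteq> {1..n}"
      using subsets by blast
    then show "ordering_event M n X j A \<in> sets M"
      using assms(2,3) by (rule ordering_event_sets)
  qed
  show "disjoint_family_on (ordering_event M n X j) \<A>"
    unfolding disjoint_family_on_def
  proof (intro ballI impI)
    fix A B assume "A \<in> \<A>" and "B \<in> \<A>" and "A \<noteq> B"
    then show "ordering_event M n X j A \<inter> ordering_event M n X j B = {}"
      using subsets by (intro ordering_events_disjoint) auto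
  qed
qed

lemma (in finite_measure) AE_no_ties:
  fixes X :: "'i \<Rightarrow> 'a \<Rightarrow> real"
  assumes "finite I" and X: "\<And>i. i \<in> I \<Longrightarrow> X i \<in> borel_measurable M"
    and ties: "\<And>i k. i \<in> I \<Longrightarrow> k \<in> I \<Longrightarrow> i \<noteq> k \<Longrightarrow> measure M {\<omega> \<in> space M. X i \<omega> = X k \<omega>} = 0"
  shows "AE \<omega> in M. \<forall>i \<in> I. \<forall>k \<in> I. i \<noteq> k \<longrightarrow> X i \<omega> \<noteq> X k \<omega>"
proof (intro eventually_ball_finite ballI \<open>finite I\<close>)
  fix i k assume i: "i \<in> I" and k: "k \<in> I"
  show "AE \<omega> in M. i \<noteq> k \<longrightarrow> X i \<omega> \<noteq> X k \<omega>"
  proof (cases "i = k")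
    case False
    have "{\<omega> \<in> space M. X i \<omega> = X k \<omega>} \<in> sets M"
      using X[OF i] X[OF k] by (rule borel_measurable_eq)
    with ties[OF i k False] have "AE \<omega> in M. X i \<omega> \<noteq> X k \<omega>"
      by (subst AE_iff_measurable) (auto simp: emeasure_eq_measure)
    then show ?thesis by (rule AE_mp) simp
  qed simp
qed

definition critical_sets :: "nat \<Rightarrow> (nat set \<Rightarrow> bool) \<Rightarrow> nat \<Rightarrow> nat set set" where
  "critical_sets n phi j = {A \<in> Pow ({1..n} - {j}). phi (A \<union> {j}) \<and> \<not> phi A}"

(* By monotonicity each increment phi (A \<union> {j}) - phi A is 0 or 1, so the first sum of
   the theorem is the sum of q over the critical sets. *)
lemma sum_over_critical_sets:
  fixes q :: "nat set \<Rightarrow> 'b::comm_ring_1"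
  assumes "semicoherent n phi" and "j \<in> {1..n}"
  shows "(\<Sum>A \<in> Pow ({1..n} - {j}). q A * (of_bool (phi (A \<union> {j})) - of_bool (phi A)))
           = (\<Sum>A \<in> critical_sets n phi j. q A)"
proof -
  have "of_bool (phi (A \<union> {j})) - of_bool (phi A) = (of_bool (phi (A \<union> {j}) \<and> \<not> phi A) :: 'b)"
    if "A \<in> Pow ({1..n} - {j})" for A
  proof -
    have "A \<subseteq> A \<union> {j}" and "A \<union> {j} \<subseteq> {1..n}"
      using assms(2) that by auto
    then have "phi A \<longrightarrow> phi (A \<union> {j})"
      using assms(1) unfolding semicoherent_def by blast
    then show ?thesis
      by (cases "phi A"; cases "phi (A \<union> {j})") simp_all
  qed
  then have "(\<Sum>A \<in> Pow ({1..n} - {j}). q A * (of_bool (phi (A \<union> {j})) - of_bool (phi A)))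
           = (\<Sum>A \<in> Pow ({1..n} - {j}). if phi (A \<union> {j}) \<and> \<not> phi A then q A else 0)"
    by (intro sum.cong) auto
  also have "\<dots> = (\<Sum>A \<in> critical_sets n phi j. q A)"
    unfolding critical_sets_def by (rule sum.inter_filter[symmetric]) simp
  finally show ?thesis .
qed

lemma (in finite_measure) AE_lifetime_event_decomposition:
  assumes phi: "semicoherent n phi" and j: "j \<in> {1..n}"
    and X: "\<And>i. i \<in> {1..n} \<Longrightarrow> X i \<in> borel_measurable M"
    and nonneg: "\<And>i. i \<in> {1..n} \<Longrightarrow> AE \<omega> in M. 0 \<le> X i \<omega>"
    and ties: "\<And>i k. i \<in> {1..n} \<Longrightarrow> k \<in> {1..n} \<Longrightarrow> i \<noteq> k \<Longrightarrow>
            measure M {\<omega> \<in> space M. X i \<omega> = X k \<omega>} = 0"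
  shows "AE \<omega> in M. system_lifetime n phi X \<omega> = X j \<omega> \<longleftrightarrow>
           \<omega> \<in> (\<Union>A \<in> critical_sets n phi j. ordering_event M n X j A)"
proof -
  have "AE \<omega> in M. \<omega> \<in> space M"
    by (rule AE_space)
  moreover have "AE \<omega> in M. \<forall>i \<in> {1..n}. 0 \<le> X i \<omega>"
    using nonneg by (intro eventually_ball_finite) auto
  moreover have "AE \<omega> in M. \<forall>i \<in> {1..n}. \<forall>k \<in> {1..n}. i \<noteq> k \<longrightarrow> X i \<omega> \<noteq> X k \<omega>"
    by (rule AE_no_ties[OF finite_atLeastAtMost]) (use X ties in auto)
  ultimately show ?thesis
  proof eventually_elim
    case (elim \<omega>)
    define U where "U = {i \<in> {1..n}. X i \<omega> > X j \<omega>}"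
    have "system_lifetime n phi X \<omega> = X j \<omega> \<longleftrightarrow> phi (U \<union> {j}) \<and> \<not> phi U"
      unfolding system_lifetime_failure_times U_def
      by (rule lifetime_eq_component_iff[OF phi j]) (use elim(2,3) in simp_all)
    also have "\<dots> \<longleftrightarrow> U \<in> critical_sets n phi j"
      by (auto simp: critical_sets_def U_def)
    also have "\<dots> \<longleftrightarrow> (\<exists>A \<in> critical_sets n phi j. \<omega> \<in> ordering_event M n X j A)"
    proof -
      have ordering_iff: "\<omega> \<in> ordering_event M n X j A \<longleftrightarrow> A = U"
        if "A \<in> critical_sets n phi j" for A
      proof -
        have "A \<subseteq> {1..n} - {j}"
          using that by (simp add: critical_sets_def)
        then show ?thesis
          using ordering_pattern_iff[of A n j "\<lambda>i. X i \<omega>"] elim(1,3) j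
          unfolding ordering_event_def U_def by simp
      qed
      show ?thesis
      proof
        assume "U \<in> critical_sets n phi j"
        then show "\<exists>A \<in> critical_sets n phi j. \<omega> \<in> ordering_event M n X j A"
          using ordering_iff by blast
      next
        assume "\<exists>A \<in> critical_sets n phi j. \<omega> \<in> ordering_event M n X j A"
        then obtain A where "A \<in> critical_sets n phi j" and "\<omega> \<in> ordering_event M n X j A"
          by blast
        then show "U \<in> critical_sets n phi j"
          using ordering_iff by simp
      qed
    qed
    finally show ?case by simp
  qed
qed

theorem theorem3:
  fixes M :: "'a measure" and n :: nat and phi :: "nat set \<Rightarrow> bool"
    and X :: "nat \<Rightarrow> 'a \<Rightarrow> real" and j :: nat
  assumes "prob_space M"
    and "\<And>i. i \<in> {1..n} \<Longrightarrow> X i \<in> borel_measurable M"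
    and "\<And>i. i \<in> {1..n} \<Longrightarrow> AE \<omega> in M. 0 \<le> X i \<omega>"
    and "semicoherent n phi"
    and "\<And>i k. i \<in> {1..n} \<Longrightarrow> k \<in> {1..n} \<Longrightarrow> i \<noteq> k \<Longrightarrow>
            measure M {\<omega> \<in> space M. X i \<omega> = X k \<omega>} = 0"
    and "j \<in> {1..n}"
  shows "measure M {\<omega> \<in> space M. system_lifetime n phi X \<omega> = X j \<omega>}
           = (\<Sum>A \<in> Pow ({1..n} - {j}).
                qj M n X j A * (of_bool (phi (A \<union> {j})) - of_bool (phi A)))
       \<and> (\<Sum>A \<in> Pow ({1..n} - {j}).
                qj M n X j A * (of_bool (phi (A \<union> {j})) - of_bool (phi A)))
           = (\<Sum>A \<in> Pow {1..n}.
                (-1) ^ card ({j} - A) * qj M n X j (A - {j}) * of_bool (phi A))"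
proof -
  interpret prob_space M by fact
  have X: "\<And>i. i \<in> {1..n} \<Longrightarrow> X i \<in> borel_measurable M" and j: "j \<in> {1..n}"
    by (fact assms(2), fact assms(6))
  have "\<not> phi {}"
    using assms(4) by (simp add: semicoherent_def)
  let ?crit = "critical_sets n phi j"
  have "measure M {\<omega> \<in> space M. system_lifetime n phi X \<omega> = X j \<omega>}
          = measure M (\<Union>A \<in> ?crit. ordering_event M n X j A)"
  proof (rule measure_eq_AE)
    have "AE \<omega> in M. system_lifetime n phi X \<omega> = X j \<omega> \<longleftrightarrow>
            \<omega> \<in> (\<Union>A \<in> ?crit. ordering_event M n X j A)"
      by (rule AE_lifetime_event_decomposition) (use assms in auto)
    with AE_space show "AE \<omega> in M. \<omega> \<in> {\<omega> \<in> space M. system_lifetime n phi X \<omega> = X j \<omega>}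
            \<longleftrightarrow> \<omega> \<in> (\<Union>A \<in> ?crit. ordering_event M n X j A)"
      by eventually_elim auto
    have "Measurable.pred M (\<lambda>\<omega>. system_lifetime n phi X \<omega> = X j \<omega>)"
      by (rule measurable_lifetime_event) (use \<open>\<not> phi {}\<close> X j in auto)
    then show "{\<omega> \<in> space M. system_lifetime n phi X \<omega> = X j \<omega>} \<in> sets M"
      by (rule predE)
    show "(\<Union>A \<in> ?crit. ordering_event M n X j A) \<in> sets M"
      using j X by (intro sets.finite_UN ordering_event_sets) (auto simp: critical_sets_def)
  qed
  also have "\<dots> = (\<Sum>A \<in> ?crit. qj M n X j A)"
    using j X by (intro measure_Union_ordering_events) (auto simp: critical_sets_def)
  also have "\<dots> = (\<Sum>A \<in> Pow ({1..n} - {j}).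
                       qj M n X j A * (of_bool (phi (A \<union> {j})) - of_bool (phi A)))"
    using assms(4) j by (rule sum_over_critical_sets[symmetric])
  moreover have "insert j ({1..n} - {j}) = {1..n}"
    using j by blast
  ultimately show ?thesis
    using sum_increments_alternating[of "{1..n} - {j}" j "qj M n X j" "\<lambda>A. of_bool (phi A)"]
    by simp
qed

end
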